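(* As formal power series in $q$, $$A(q):=\frac{1}{(q;q)_\infty}\sum_{n\ge1}\frac{(-1)^{n-1}n\,q^{\frac{n(n+1)}{2}}}{1-q^n}=\sum_{\lambda}t_s(\lambda)\,q^{|\lambda|},$$ where the sum on the right runs over all partitions $\lambda$ of all positive integers.
   Context: $(q;q)_\infty:=\prod_{n\ge1}(1-q^n)$. For a partition $\lambda$, $|\lambda|$ denotes the integer it partitions. Let $n_\lambda$ be the largest integer $n$ such that $\lambda$ contains parts of each size $1,2,\ldots,n$ (so $n_\lambda=0$ if $1$ is not a part), and let $m_k$ be the multiplicity of the part $k$ in $\lambda$. The signed triangular weight of $\lambda$ is $t_s(\lambda):=\sum_{k=1}^{n_\lambda}(-1)^{k-1}k\,m_k$ (so $t_s(\lambda)=0$ if $\lambda$ has no part equal to $1$). *)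

theory Defs
  imports "HOL-Computational_Algebra.Formal_Power_Series" "HOL-Library.Multiset"
begin

definition partitions :: "nat \<Rightarrow> nat multiset set" where
  "partitions N = {lam. (\<forall>k\<in>#lam. 0 < k) \<and> sum_mset lam = N}"

definition n_lam :: "nat multiset \<Rightarrow> nat" where
  "n_lam lam = (GREATEST n. \<forall>k\<in>{1..n}. k \<in># lam)"

definition t_s :: "nat multiset \<Rightarrow> int" where
  "t_s lam = (\<Sum>k=1..n_lam lam. (-1)^(k-1) * int k * int (count lam k))"

text \<open>The n-th summand (n \<ge> 1) of the series defining A(q), before dividing by (q;q)_inf.\<close>
definition A_term :: "nat \<Rightarrow> rat fps" where
  "A_term n = fps_const (of_int ((-1)^(n-1) * int n)) * fps_X ^ (n*(n+1) div 2)
              / (1 - fps_X ^ n)"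

end

(*
  Fix k \<ge> 1 and weight a partition by m_k if 1, ..., k-1 are all parts and by 0 otherwise.
  This weight is m_k for k \<le> n_lambda and 0 for k > n_lambda, so summing (-1)^(k-1) k times it
  over k gives t_s. It is a product of one factor per part size, hence its generating function is
    \<Prod>_{j<k} q^j/(1-q^j) * q^k/(1-q^k)^2 * \<Prod>_{j>k} 1/(1-q^j),
  and multiplying by (q;q)_\<infinity> leaves q^(k(k+1)/2)/(1-q^k), the k-th summand of the series.
  With parts bounded by M all products are finite; the theorem follows by letting M tend to
  infinity in the topology of formal power series.
*)

theory Submission
  imports Defs
begin

unbundle fps_syntax

lemma mem_le_sum_mset: "x \<in># lam \<Longrightarrow> x \<le> sum_mset (lam :: nat multiset)"
  by (induction lam) auto

definition partitions_bounded :: "nat \<Rightarrow> nat \<Rightarrow> nat multiset set" where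
  "partitions_bounded M N = {lam. set_mset lam \<subseteq> {1..M} \<and> sum_mset lam = N}"

lemma partitions_bounded_eq_partitions:
  "N \<le> M \<Longrightarrow> partitions_bounded M N = partitions N"
  unfolding partitions_bounded_def partitions_def
  by (auto simp: Suc_le_eq) (meson mem_le_sum_mset order_trans)

lemma finite_partitions_bounded: "finite (partitions_bounded M N)"
proof (rule finite_subset)
  have "size lam \<le> sum_mset lam" if "set_mset lam \<subseteq> {1..M}" for lam :: "nat multiset"
    using that by (induction lam) auto
  then show "partitions_bounded M N \<subseteq> (\<Union>n\<le>N. multisets_of_size {1..M} n)"
    by (auto simp: partitions_bounded_def multisets_of_size_def)
qed auto

lemma le_n_lam_iff: "k \<le> n_lam lam \<longleftrightarrow> (\<forall>j\<in>{1..k}. j \<in># lam)"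
proof -
  have bounded: "n \<le> sum_mset lam" if "\<forall>j\<in>{1..n}. j \<in># lam" for n
    using that mem_le_sum_mset[of n lam] by (cases "n = 0") auto
  have "\<forall>j\<in>{1..n_lam lam}. j \<in># lam"
    unfolding n_lam_def by (rule GreatestI_nat[of _ 0 "sum_mset lam"]) (use bounded in auto)
  moreover have "k \<le> n_lam lam" if "\<forall>j\<in>{1..k}. j \<in># lam"
    unfolding n_lam_def by (rule Greatest_le_nat[of _ _ "sum_mset lam"]) (use that bounded in auto)
  ultimately show ?thesis
    by auto
qed

definition multiplicity_fps :: "nat \<Rightarrow> (nat \<Rightarrow> 'a :: zero) \<Rightarrow> 'a fps" where
  "multiplicity_fps j u = Abs_fps (\<lambda>N. if j dvd N then u (N div j) else 0)"

definition multiplicity_weight ::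
    "(nat \<Rightarrow> nat \<Rightarrow> 'a :: comm_monoid_mult) \<Rightarrow> nat \<Rightarrow> nat multiset \<Rightarrow> 'a" where
  "multiplicity_weight w M lam = (\<Prod>j=1..M. w j (count lam j))"

definition weighted_partition_fps :: "(nat \<Rightarrow> nat \<Rightarrow> 'a :: comm_semiring_1) \<Rightarrow> nat \<Rightarrow> 'a fps" where
  "weighted_partition_fps w M =
     Abs_fps (\<lambda>N. \<Sum>lam\<in>partitions_bounded M N. multiplicity_weight w M lam)"

lemma fps_mult_multiplicity_fps_nth:
  fixes F :: "'a :: comm_semiring_1 fps"
  assumes "0 < j"
  shows "(F * multiplicity_fps j u) $ N = (\<Sum>m | j * m \<le> N. F $ (N - j * m) * u m)"
proof -
  have "(F * multiplicity_fps j u) $ N = (\<Sum>i=0..N. multiplicity_fps j u $ i * F $ (N - i))"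
    by (simp add: fps_mult_nth mult.commute[of F] mult.commute[of "multiplicity_fps j u $ _"])
  also have "\<dots> = (\<Sum>i | i \<le> N \<and> j dvd i. u (i div j) * F $ (N - i))"
    by (intro sum.mono_neutral_cong_right) (auto simp: multiplicity_fps_def)
  also have "\<dots> = (\<Sum>m | j * m \<le> N. u m * F $ (N - j * m))"
    using assms by (intro sum.reindex_bij_witness[of _ "\<lambda>m. j * m" "\<lambda>i. i div j"]) auto
  finally show ?thesis
    by (simp add: mult.commute)
qed

lemma sum_mset_filter_neq_plus_count:
  "sum_mset lam = sum_mset (filter_mset (\<lambda>x. x \<noteq> a) lam) + a * count lam (a :: nat)"
  by (induction lam) auto

lemma bij_betw_partitions_bounded_Suc:
  "bij_betw (\<lambda>(m, mu). mu + replicate_mset m (Suc M))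
     (SIGMA m:{m. Suc M * m \<le> N}. partitions_bounded M (N - Suc M * m))
     (partitions_bounded (Suc M) N)"
proof (rule bij_betw_byWitness[where f' = "\<lambda>lam. (count lam (Suc M), filter_mset (\<lambda>x. x \<noteq> Suc M) lam)"])
  have no_top: "count mu (Suc M) = 0" "filter_mset (\<lambda>x. x \<noteq> Suc M) mu = mu"
    if "set_mset mu \<subseteq> {1..M}" for mu
    using that by (auto simp: filter_mset_eq_conv simp flip: not_in_iff)
  show "\<forall>a\<in>SIGMA m:{m. Suc M * m \<le> N}. partitions_bounded M (N - Suc M * m).
          (count (case a of (m, mu) \<Rightarrow> mu + replicate_mset m (Suc M)) (Suc M),
           filter_mset (\<lambda>x. x \<noteq> Suc M) (case a of (m, mu) \<Rightarrow> mu + replicate_mset m (Suc M))) = a"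
    using no_top by (auto simp: partitions_bounded_def)
  show "\<forall>lam\<in>partitions_bounded (Suc M) N.
          (case (count lam (Suc M), filter_mset (\<lambda>x. x \<noteq> Suc M) lam) of
             (m, mu) \<Rightarrow> mu + replicate_mset m (Suc M)) = lam"
    by (auto simp: multiset_eq_iff)
  show "(\<lambda>(m, mu). mu + replicate_mset m (Suc M))
          ` (SIGMA m:{m. Suc M * m \<le> N}. partitions_bounded M (N - Suc M * m))
        \<subseteq> partitions_bounded (Suc M) N"
  proof clarify
    fix m mu
    assume "Suc M * m \<le> N" and "mu \<in> partitions_bounded M (N - Suc M * m)"
    then have "set_mset mu \<subseteq> {1..M}" and "sum_mset mu = N - Suc M * m"
      unfolding partitions_bounded_def by blast+
    then have "set_mset (mu + replicate_mset m (Suc M)) \<subseteq> {1..Suc M}"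
      and "sum_mset (mu + replicate_mset m (Suc M)) = N"
      using \<open>Suc M * m \<le> N\<close> by auto
    then show "mu + replicate_mset m (Suc M) \<in> partitions_bounded (Suc M) N"
      unfolding partitions_bounded_def by blast
  qed
  show "(\<lambda>lam. (count lam (Suc M), filter_mset (\<lambda>x. x \<noteq> Suc M) lam)) ` partitions_bounded (Suc M) N
      \<subseteq> (SIGMA m:{m. Suc M * m \<le> N}. partitions_bounded M (N - Suc M * m))"
  proof (rule image_subsetI)
    fix lam
    assume "lam \<in> partitions_bounded (Suc M) N"
    then have parts: "set_mset lam \<subseteq> {1..Suc M}" and sum: "sum_mset lam = N"
      unfolding partitions_bounded_def by blast+
    have "set_mset (filter_mset (\<lambda>x. x \<noteq> Suc M) lam) \<subseteq> {1..M}"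
      using parts by (force simp: le_Suc_eq)
    moreover have "Suc M * count lam (Suc M) \<le> N"
      and "sum_mset (filter_mset (\<lambda>x. x \<noteq> Suc M) lam) = N - Suc M * count lam (Suc M)"
      using sum_mset_filter_neq_plus_count[of lam "Suc M"] sum by linarith+
    ultimately show "(count lam (Suc M), filter_mset (\<lambda>x. x \<noteq> Suc M) lam)
        \<in> (SIGMA m:{m. Suc M * m \<le> N}. partitions_bounded M (N - Suc M * m))"
      unfolding partitions_bounded_def by blast
  qed
qed

lemma multiplicity_weight_Suc:
  assumes "set_mset mu \<subseteq> {1..M}"
  shows "multiplicity_weight w (Suc M) (mu + replicate_mset m (Suc M))
           = multiplicity_weight w M mu * w (Suc M) m"
proof -
  have "count mu (Suc M) = 0"
    using assms by (auto simp flip: not_in_iff)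
  moreover have "count (mu + replicate_mset m (Suc M)) j = count mu j" if "j \<le> M" for j
    using that by simp
  ultimately show ?thesis
    unfolding multiplicity_weight_def by (auto intro!: prod.cong)
qed

lemma weighted_partition_fps_Suc:
  "weighted_partition_fps w (Suc M) = weighted_partition_fps w M * multiplicity_fps (Suc M) (w (Suc M))"
proof (rule fps_ext)
  fix N
  have "weighted_partition_fps w (Suc M) $ N
      = (\<Sum>(m, mu)\<in>(SIGMA m:{m. Suc M * m \<le> N}. partitions_bounded M (N - Suc M * m)).
           multiplicity_weight w (Suc M) (mu + replicate_mset m (Suc M)))"
    unfolding weighted_partition_fps_def
    by (simp add: sum.reindex_bij_betw[OF bij_betw_partitions_bounded_Suc, symmetric] case_prod_beta')
  also have "\<dots> = (\<Sum>m | Suc M * m \<le> N. \<Sum>mu\<in>partitions_bounded M (N - Suc M * m).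
                    multiplicity_weight w (Suc M) (mu + replicate_mset m (Suc M)))"
  proof (rule sum.Sigma [symmetric])
    show "finite {m. Suc M * m \<le> N}"
      by (rule finite_subset[of _ "{..N}"]) auto
  qed (simp add: finite_partitions_bounded)
  also have "\<dots> = (\<Sum>m | Suc M * m \<le> N. \<Sum>mu\<in>partitions_bounded M (N - Suc M * m).
                    multiplicity_weight w M mu * w (Suc M) m)"
    by (intro sum.cong refl) (simp add: partitions_bounded_def multiplicity_weight_Suc)
  also have "\<dots> = (weighted_partition_fps w M * multiplicity_fps (Suc M) (w (Suc M))) $ N"
    by (simp add: fps_mult_multiplicity_fps_nth weighted_partition_fps_def sum_distrib_right)
  finally show "weighted_partition_fps w (Suc M) $ N = \<dots>" .
qed

lemma weighted_partition_fps_eq_prod: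
  "weighted_partition_fps w M = (\<Prod>j=1..M. multiplicity_fps j (w j))"
proof (induction M)
  case 0
  show ?case
  proof (rule fps_ext)
    fix N
    have "partitions_bounded 0 N = (if N = 0 then {{#}} else {})"
      unfolding partitions_bounded_def by force
    then show "weighted_partition_fps w 0 $ N = (\<Prod>j=1..0. multiplicity_fps j (w j)) $ N"
      by (simp add: weighted_partition_fps_def multiplicity_weight_def)
  qed
next
  case (Suc M)
  then show ?case
    by (simp add: weighted_partition_fps_Suc)
qed

lemma fps_one_minus_X_power_mult_nth:
  "((1 - fps_X ^ j) * f) $ N = f $ N - (if j \<le> N then f $ (N - j) else (0 :: 'a :: ring_1))"
proof -
  have "(1 - fps_X ^ j) * f = f - fps_X ^ j * f"
    by (simp add: algebra_simps)
  then show ?thesis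
    by (simp add: fps_X_power_mult_nth)
qed

lemma one_minus_X_power_mult_multiplicity_fps:
  fixes u :: "nat \<Rightarrow> 'a :: ring_1"
  assumes "0 < j"
  shows "(1 - fps_X ^ j) * multiplicity_fps j u
           = multiplicity_fps j (\<lambda>m. u m - (if m = 0 then 0 else u (m - 1)))"
proof (rule fps_ext)
  fix N
  show "((1 - fps_X ^ j) * multiplicity_fps j u) $ N
          = multiplicity_fps j (\<lambda>m. u m - (if m = 0 then 0 else u (m - 1))) $ N"
  proof (cases "j \<le> N")
    case True
    then have "j dvd N - j \<longleftrightarrow> j dvd N" and "(N - j) div j = N div j - 1" and "N div j \<noteq> 0"
      using assms by (auto simp: less_eq_dvd_minus le_div_geq)
    then show ?thesis
      using True by (simp add: fps_one_minus_X_power_mult_nth multiplicity_fps_def)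
  next
    case False
    then have "j dvd N \<longleftrightarrow> N = 0"
      by (auto dest: dvd_imp_le)
    then show ?thesis
      using False by (simp add: fps_one_minus_X_power_mult_nth multiplicity_fps_def)
  qed
qed

definition ts_weight :: "nat \<Rightarrow> nat \<Rightarrow> nat \<Rightarrow> 'a :: comm_semiring_1" where
  "ts_weight k j m = (if j < k then of_bool (m \<noteq> 0) else if j = k then of_nat m else 1)"

lemma multiplicity_weight_ts_weight:
  assumes "k \<in> {1..M}"
  shows "multiplicity_weight (ts_weight k) M lam = (if k \<le> n_lam lam then of_nat (count lam k) else 0)"
proof (cases "\<forall>j\<in>{1..<k}. j \<in># lam")
  case True
  then have "multiplicity_weight (ts_weight k) M lam
      = (\<Prod>j=1..M. if j = k then of_nat (count lam k) else 1)"
    unfolding multiplicity_weight_def ts_weight_def by (intro prod.cong) (auto simp flip: not_in_iff)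
  also have "\<dots> = of_nat (count lam k)"
    using assms by simp
  also have "\<dots> = (if k \<le> n_lam lam then of_nat (count lam k) else 0)"
  proof -
    have "{1..k} = insert k {1..<k}"
      using assms by auto
    then have "k \<le> n_lam lam \<longleftrightarrow> k \<in># lam"
      using True by (simp add: le_n_lam_iff)
    then show ?thesis
      by (simp add: not_in_iff)
  qed
  finally show ?thesis .
next
  case False
  then obtain i where i: "i \<in> {1..<k}" "i \<notin># lam"
    by blast
  then have "multiplicity_weight (ts_weight k) M lam = 0"
    unfolding multiplicity_weight_def using assms
    by (intro prod_zero bexI[of _ i]) (auto simp: ts_weight_def not_in_iff)
  moreover have "\<not> k \<le> n_lam lam"
    using i by (auto simp: le_n_lam_iff)
  ultimately show ?thesis
    by simp
qed

lemma multiplicity_fps_indicator_0: "multiplicity_fps j (\<lambda>m. of_bool (m = 0)) = 1"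
  by (rule fps_ext) (auto simp: multiplicity_fps_def)

lemma multiplicity_fps_indicator_1: "0 < j \<Longrightarrow> multiplicity_fps j (\<lambda>m. of_bool (m = 1)) = fps_X ^ j"
  by (rule fps_ext) (auto simp: multiplicity_fps_def elim!: dvdE)

lemma one_minus_X_power_mult_multiplicity_fps_1:
  assumes "0 < j"
  shows "(1 - fps_X ^ j) * multiplicity_fps j (\<lambda>_. 1 :: 'a :: ring_1) = 1"
proof -
  have "(1 - fps_X ^ j) * multiplicity_fps j (\<lambda>_. 1 :: 'a) = multiplicity_fps j (\<lambda>m. of_bool (m = 0))"
    unfolding one_minus_X_power_mult_multiplicity_fps[OF assms]
    by (rule arg_cong[where f = "multiplicity_fps j"]) auto
  also have "\<dots> = 1"
    by (rule multiplicity_fps_indicator_0)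
  finally show ?thesis .
qed

lemma one_minus_X_power_mult_multiplicity_fps_positive:
  assumes "0 < j"
  shows "(1 - fps_X ^ j) * multiplicity_fps j (\<lambda>m. of_bool (m \<noteq> 0) :: 'a :: ring_1) = fps_X ^ j"
proof -
  have "(1 - fps_X ^ j) * multiplicity_fps j (\<lambda>m. of_bool (m \<noteq> 0) :: 'a)
          = multiplicity_fps j (\<lambda>m. of_bool (m = 1))"
    unfolding one_minus_X_power_mult_multiplicity_fps[OF assms]
    by (rule arg_cong[where f = "multiplicity_fps j"]) auto
  also have "\<dots> = fps_X ^ j"
    by (rule multiplicity_fps_indicator_1[OF assms])
  finally show ?thesis .
qed

lemma one_minus_X_power_mult_multiplicity_fps_of_nat:
  assumes "0 < j"
  shows "(1 - fps_X ^ j) * multiplicity_fps j (of_nat :: nat \<Rightarrow> 'a :: field)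
           = fps_X ^ j * inverse (1 - fps_X ^ j)"
proof -
  have unit: "(1 - fps_X ^ j :: 'a fps) $ 0 \<noteq> 0"
    using assms by simp
  then have nonzero: "(1 - fps_X ^ j :: 'a fps) \<noteq> 0"
    by (metis fps_zero_nth)
  have "(1 - fps_X ^ j) * multiplicity_fps j (of_nat :: nat \<Rightarrow> 'a)
          = multiplicity_fps j (\<lambda>m. of_bool (m \<noteq> 0))"
    unfolding one_minus_X_power_mult_multiplicity_fps[OF assms]
    by (rule arg_cong[where f = "multiplicity_fps j"]) (auto simp: of_nat_diff)
  also have "\<dots> = ((1 - fps_X ^ j) * multiplicity_fps j (\<lambda>m. of_bool (m \<noteq> 0))) / (1 - fps_X ^ j)"
    using nonzero by (rule nonzero_mult_div_cancel_left [symmetric])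
  also have "\<dots> = fps_X ^ j * inverse (1 - fps_X ^ j)"
    unfolding one_minus_X_power_mult_multiplicity_fps_positive[OF assms] using unit by (rule fps_divide_unit)
  finally show ?thesis .
qed

lemma one_minus_X_power_mult_multiplicity_fps_ts_weight:
  assumes "0 < j"
  shows "(1 - fps_X ^ j) * multiplicity_fps j (ts_weight k j)
           = (if j < k then fps_X ^ j
              else if j = k then fps_X ^ j * inverse (1 - fps_X ^ j) else (1 :: 'a :: field fps))"
proof -
  have "ts_weight k j = (if j < k then (\<lambda>m. of_bool (m \<noteq> 0)) else if j = k then of_nat else (\<lambda>_. 1 :: 'a))"
    by (auto simp: fun_eq_iff ts_weight_def)
  then show ?thesis
    using one_minus_X_power_mult_multiplicity_fps_1[OF assms, where 'a = 'a]
      one_minus_X_power_mult_multiplicity_fps_positive[OF assms, where 'a = 'a]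
      one_minus_X_power_mult_multiplicity_fps_of_nat[OF assms, where 'a = 'a]
    by (simp only: if_distrib[of "\<lambda>u. (1 - fps_X ^ j) * multiplicity_fps j u"])
qed

lemma prod_one_minus_X_power_mult_ts_weight_fps:
  assumes "k \<in> {1..M}"
  shows "(\<Prod>j=1..M. 1 - fps_X ^ j) * weighted_partition_fps (ts_weight k) M
           = fps_X ^ (k * (k + 1) div 2) * inverse (1 - fps_X ^ k :: 'a :: field fps)"
proof -
  have "(\<Prod>j=1..M. 1 - fps_X ^ j) * weighted_partition_fps (ts_weight k) M
      = (\<Prod>j=1..M. (1 - fps_X ^ j) * multiplicity_fps j (ts_weight k j) :: 'a fps)"
    by (simp add: weighted_partition_fps_eq_prod prod.distrib)
  also have "\<dots> = (\<Prod>j=1..M. (if j \<le> k then fps_X ^ j else 1)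
                              * (if j = k then inverse (1 - fps_X ^ k) else 1))"
    by (intro prod.cong) (auto simp: one_minus_X_power_mult_multiplicity_fps_ts_weight)
  also have "\<dots> = (\<Prod>j=1..k. fps_X ^ j) * inverse (1 - fps_X ^ k)"
  proof -
    have "{1..M} \<inter> {j. j \<le> k} = {1..k}"
      using assms by auto
    then show ?thesis
      using assms by (simp add: prod.distrib prod.If_cases)
  qed
  also have "(\<Prod>j=1..k. fps_X ^ j) = (fps_X ^ (\<Sum>j=1..k. j) :: 'a fps)"
    by (simp add: power_sum)
  also have "(\<Sum>j=1..k. j) = k * (k + 1) div 2"
    using Sum_Icc_nat[of 1 k] by simp
  finally show ?thesis .
qed

definition ts_fps_bounded :: "nat \<Rightarrow> rat fps" where
  "ts_fps_bounded M = (\<Sum>k=1..M. fps_const (of_int ((-1) ^ (k - 1) * int k))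
                                  * weighted_partition_fps (ts_weight k) M)"

lemma ts_fps_bounded_nth:
  "ts_fps_bounded M $ N = of_int (\<Sum>lam\<in>partitions_bounded M N. t_s lam)"
proof -
  have "ts_fps_bounded M $ N = (\<Sum>lam\<in>partitions_bounded M N. \<Sum>k=1..M.
          of_int ((-1) ^ (k - 1) * int k) * multiplicity_weight (ts_weight k) M lam)"
    unfolding ts_fps_bounded_def weighted_partition_fps_def
    by (simp add: fps_sum_nth sum_distrib_left) (rule sum.swap)
  also have "\<dots> = (\<Sum>lam\<in>partitions_bounded M N. of_int (t_s lam))"
  proof (rule sum.cong)
    fix lam assume lam: "lam \<in> partitions_bounded M N"
    have "n_lam lam \<le> M"
    proof (cases "n_lam lam = 0")
      case False
      then have "n_lam lam \<in># lam"
        using le_n_lam_iff[of "n_lam lam" lam] by auto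
      then show ?thesis
        using lam by (auto simp: partitions_bounded_def)
    qed simp
    then have "(\<Sum>k=1..M. of_int ((-1) ^ (k - 1) * int k) * multiplicity_weight (ts_weight k) M lam)
             = (\<Sum>k=1..n_lam lam. of_int ((-1) ^ (k - 1) * int k) * of_nat (count lam k) :: rat)"
      by (intro sum.mono_neutral_cong_right) (auto simp: multiplicity_weight_ts_weight)
    then show "(\<Sum>k=1..M. of_int ((-1) ^ (k - 1) * int k) * multiplicity_weight (ts_weight k) M lam)
             = (of_int (t_s lam) :: rat)"
      by (simp add: t_s_def)
  qed simp
  finally show ?thesis
    by simp
qed

lemma prod_one_minus_X_power_mult_ts_fps_bounded:
  "(\<Prod>j=1..M. 1 - fps_X ^ j) * ts_fps_bounded M = (\<Sum>k=1..M. A_term k)"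
  unfolding ts_fps_bounded_def sum_distrib_left
proof (rule sum.cong)
  fix k assume k: "k \<in> {1..M}"
  have "(\<Prod>j=1..M. 1 - fps_X ^ j) * (fps_const (of_int ((-1) ^ (k - 1) * int k))
          * weighted_partition_fps (ts_weight k) M)
      = (fps_const (of_int ((-1) ^ (k - 1) * int k))
          * ((\<Prod>j=1..M. 1 - fps_X ^ j) * weighted_partition_fps (ts_weight k) M) :: rat fps)"
    by (rule mult.left_commute)
  also have "\<dots> = fps_const (of_int ((-1) ^ (k - 1) * int k))
                    * (fps_X ^ (k * (k + 1) div 2) * inverse (1 - fps_X ^ k))"
    by (simp only: prod_one_minus_X_power_mult_ts_weight_fps[OF k])
  also have "\<dots> = A_term k"
    unfolding A_term_def using k by (subst fps_divide_unit) (auto simp: mult.assoc)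
  finally show "(\<Prod>j=1..M. 1 - fps_X ^ j) * (fps_const (of_int ((-1) ^ (k - 1) * int k))
                  * weighted_partition_fps (ts_weight k) M) = A_term k" .
qed simp

lemma tendsto_fps_mult:
  fixes f g :: "'b \<Rightarrow> 'a :: ring fps"
  assumes "(f \<longlongrightarrow> a) F" and "(g \<longlongrightarrow> b) F"
  shows "((\<lambda>x. f x * g x) \<longlongrightarrow> a * b) F"
proof (rule tendsto_fpsI)
  fix n
  have "eventually (\<lambda>x. \<forall>i\<in>{..n}. f x $ i = a $ i \<and> g x $ i = b $ i) F"
    using assms by (subst eventually_ball_finite_distrib) (auto simp: tendsto_fps_iff eventually_conj)
  then show "eventually (\<lambda>x. (f x * g x) $ n = (a * b) $ n) F"
    by eventually_elim (auto simp: fps_mult_nth intro!: sum.cong)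
qed

lemma ts_fps_bounded_tendsto:
  "ts_fps_bounded \<longlonglongrightarrow> Abs_fps (\<lambda>N. of_int (\<Sum>lam\<in>partitions N. t_s lam))"
proof (rule tendsto_fpsI)
  fix N
  show "eventually (\<lambda>M. ts_fps_bounded M $ N = Abs_fps (\<lambda>N. of_int (\<Sum>lam\<in>partitions N. t_s lam)) $ N)
          sequentially"
    using eventually_ge_at_top[of N]
    by eventually_elim (simp add: ts_fps_bounded_nth partitions_bounded_eq_partitions)
qed

theorem theorem1p3:
  fixes P S :: "rat fps"
  assumes "(\<lambda>N. \<Prod>k=1..N. (1 - fps_X ^ k)) \<longlonglongrightarrow> P"
    and "(\<lambda>n. A_term (Suc n)) sums S"
  shows "inverse P * S = Abs_fps (\<lambda>N. of_int (\<Sum>lam\<in>partitions N. t_s lam))"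
proof -
  define T where "T = Abs_fps (\<lambda>N. of_int (\<Sum>lam\<in>partitions N. t_s lam) :: rat)"
  from assms(1) ts_fps_bounded_tendsto[folded T_def]
  have "(\<lambda>M. (\<Prod>j=1..M. 1 - fps_X ^ j) * ts_fps_bounded M) \<longlonglongrightarrow> P * T"
    by (rule tendsto_fps_mult)
  moreover have "(\<lambda>M. (\<Prod>j=1..M. 1 - fps_X ^ j) * ts_fps_bounded M) \<longlonglongrightarrow> S"
    using assms(2) unfolding sums_def prod_one_minus_X_power_mult_ts_fps_bounded
    by (simp add: sum.atLeast1_atMost_eq)
  ultimately have "P * T = S"
    by (rule LIMSEQ_unique)
  have "(\<Prod>j=1..M. 1 - fps_X ^ j :: rat fps) $ 0 = 1" for M
    by (simp add: fps_prod_nth' prod.neutral)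
  moreover have "eventually (\<lambda>M. (\<Prod>j=1..M. 1 - fps_X ^ j) $ 0 = P $ 0) sequentially"
    using assms(1) by (simp only: tendsto_fps_iff)
  ultimately have "P $ 0 = 1"
    by simp
  then have "inverse P * S = T"
    using \<open>P * T = S\<close> inverse_mult_eq_1[of P] by (metis mult.assoc mult_1 one_neq_zero)
  then show ?thesis
    by (simp add: T_def)
qed

end
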